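(* Let $a\ge2$ be an integer. For $n\ge0$ let $F(n,t)=\dfrac{n!^a}{\Gamma^{a-1}(t+1)\Gamma^a(n-t+1)}$ and, for integers $0\le\mu\le a-1$, $F_{n,\mu}:=\sum_{k=0}^n\bigl(\frac{d}{dt}\bigr)^\mu F(n,t)\big|_{t=k}$. Let $q_n=\sum_{k=0}^n\binom nk^a k!$, $p_{n,\mu}=\sum_{k=0}^n\binom nk^a k!\,Y_\mu(r_1(k),\ldots,r_\mu(k))$ with $r_m(k)=(m-1)!\bigl(aH_{n-k}^{(m)}+(-1)^m(a-1)H_k^{(m)}\bigr)$, and $\alpha_\mu=Y_\mu(x_1,\ldots,x_\mu)$ with $x_1=\gamma$, $x_m=(m-1)!(a+(-1)^m(a-1))\zeta(m)$ for $m\ge2$. Then for each $\mu=1,\ldots,a-1$ there exist $\mu$ constants $\lambda_{\mu,\nu}$, $\nu=1,\ldots,\mu$, independent of $n$, such that for all $n=0,1,2,\ldots$ $$p_{n,\mu}-q_n\alpha_\mu=\sum_{\nu=1}^\mu\lambda_{\mu,\nu}F_{n,\nu};$$ moreover $F_{n,0}=q_n$ and $D_n^\mu\,p_{n,\mu}\in\mathbb{Z}$.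
   Context: $\gamma$ is Euler's constant, $\zeta$ the Riemann zeta function, $H_n^{(m)}=\sum_{j=1}^n j^{-m}$ ($H_0^{(m)}=0$), $D_n=\operatorname{lcm}(1,\ldots,n)$. $Y_n$ is the complete exponential Bell polynomial: $\exp\bigl(\sum_{m\ge1}x_m t^m/m!\bigr)=\sum_{n\ge0}Y_n(x_1,\ldots,x_n)t^n/n!$. *)

theory Defs
  imports "HOL-Analysis.Analysis" "HOL-Computational_Algebra.Formal_Power_Series"
begin

definition harmgen :: "nat \<Rightarrow> nat \<Rightarrow> real" where
  "harmgen m n = (\<Sum>j=1..n. 1 / (real j) ^ m)"

text \<open>Riemann zeta at integer m (used only for m >= 2).\<close>
definition zeta_nat :: "nat \<Rightarrow> real" where
  "zeta_nat m = (\<Sum>k. 1 / (real (Suc k)) ^ m)"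

text \<open>Complete exponential Bell polynomial via its generating function:
  exp(sum_{m>=1} x_m t^m/m!) = sum_n Y_n t^n/n!.\<close>
definition bellY :: "nat \<Rightarrow> (nat \<Rightarrow> real) \<Rightarrow> real" where
  "bellY n x = fact n *
     fps_nth (fps_exp 1 oo Abs_fps (\<lambda>m. if m = 0 then 0 else x m / fact m)) n"

text \<open>F(n,t) = n!^a / (Gamma(t+1)^(a-1) Gamma(n-t+1)^a), written with the
  reciprocal Gamma function so that it is the entire function.\<close>
definition Ffun :: "nat \<Rightarrow> nat \<Rightarrow> real \<Rightarrow> real" where
  "Ffun a n t = (fact n) ^ a * rGamma (t + 1) ^ (a - 1) * rGamma (real n - t + 1) ^ a"

definition Fsum :: "nat \<Rightarrow> nat \<Rightarrow> nat \<Rightarrow> real" where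
  "Fsum a n \<mu> = (\<Sum>k=0..n. (deriv ^^ \<mu>) (Ffun a n) (real k))"

definition qseq :: "nat \<Rightarrow> nat \<Rightarrow> real" where
  "qseq a n = (\<Sum>k=0..n. real (n choose k) ^ a * fact k)"

definition rterm :: "nat \<Rightarrow> nat \<Rightarrow> nat \<Rightarrow> nat \<Rightarrow> real" where
  "rterm a n k m = fact (m - 1) *
     (real a * harmgen m (n - k) + (-1) ^ m * (real a - 1) * harmgen m k)"

definition pseq :: "nat \<Rightarrow> nat \<Rightarrow> nat \<Rightarrow> real" where
  "pseq a n \<mu> = (\<Sum>k=0..n. real (n choose k) ^ a * fact k * bellY \<mu> (rterm a n k))"

definition xconst :: "nat \<Rightarrow> nat \<Rightarrow> real" where
  "xconst a m = (if m = 1 then euler_mascheroni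
                 else fact (m - 1) * (real a + (-1) ^ m * (real a - 1)) * zeta_nat m)"

definition alpha :: "nat \<Rightarrow> nat \<Rightarrow> real" where
  "alpha a \<mu> = bellY \<mu> (xconst a)"

end

theory Submission
  imports Defs "HOL-Complex_Analysis.Complex_Analysis"
begin

text \<open>
  The logarithmic derivative of F(n,t) in t is L(t) = a psi(n-t+1) - (a-1) psi(t+1), so
  (d/dt)^mu F = F * Y_mu(L, L', ..., L^(mu-1)). At an integer 0 <= k <= n we have
  F(n,k) = binom(n,k)^a k!, and the values of the polygamma functions at integers give
  L^(m-1)(k) = r_m(k) - x_m. The Bell polynomials are of binomial type,
  Y_mu(r) = sum_j binom(mu,j) Y_j(r - x) Y_(mu-j)(x); multiplying by F(n,k) and summing over k
  yields p_(n,mu) = sum_j binom(mu,j) alpha_(mu-j) F_(n,j), whose j = 0 term is alpha_mu q_n.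
  Integrality holds because Y_mu has integer coefficients and is isobaric of weight mu, while
  D_n^m r_m(k) is an integer.
\<close>

fun bell_poly :: "nat \<Rightarrow> (nat \<Rightarrow> 'a::comm_ring_1) \<Rightarrow> 'a" where
  "bell_poly 0 x = 1"
| "bell_poly (Suc n) x = (\<Sum>i=0..n. of_nat (n choose i) * bell_poly i x * x (Suc n - i))"

lemma bell_poly_cong:
  assumes "\<And>m. 1 \<le> m \<Longrightarrow> m \<le> n \<Longrightarrow> x m = y m"
  shows "bell_poly n x = bell_poly n y"
  using assms
proof (induction n rule: less_induct)
  case (less n)
  then show ?case by (cases n) (auto intro!: sum.cong)
qed

lemma of_real_bell_poly:
  "of_real (bell_poly n x) = bell_poly n (\<lambda>m. of_real (x m) :: 'a::{real_algebra_1,comm_ring_1})"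
proof (induction n rule: less_induct)
  case (less n)
  then show ?case by (cases n) auto
qed

lemma bell_poly_scaled_Ints:
  fixes D :: "'a::comm_ring_1"
  assumes "\<And>m. 1 \<le> m \<Longrightarrow> m \<le> n \<Longrightarrow> D ^ m * x m \<in> \<int>"
  shows "D ^ n * bell_poly n x \<in> \<int>"
  using assms
proof (induction n rule: less_induct)
  case (less n)
  show ?case
  proof (cases n)
    case 0
    then show ?thesis by simp
  next
    case (Suc m)
    have "D ^ Suc m * bell_poly (Suc m) x
        = (\<Sum>i=0..m. of_nat (m choose i) * (D ^ i * bell_poly i x) * (D ^ (Suc m - i) * x (Suc m - i)))"
      unfolding bell_poly.simps sum_distrib_left
    proof (rule sum.cong[OF refl])
      fix i assume "i \<in> {0..m}"
      then have "D ^ Suc m = D ^ i * D ^ (Suc m - i)" by (simp flip: power_add)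
      then show "D ^ Suc m * (of_nat (m choose i) * bell_poly i x * x (Suc m - i)) =
          of_nat (m choose i) * (D ^ i * bell_poly i x) * (D ^ (Suc m - i) * x (Suc m - i))"
        by (simp add: algebra_simps)
    qed
    also have "\<dots> \<in> \<int>"
    proof (intro Ints_sum)
      fix i assume "i \<in> {0..m}"
      then have "D ^ i * bell_poly i x \<in> \<int>" "D ^ (Suc m - i) * x (Suc m - i) \<in> \<int>"
        using less Suc by auto
      then show "of_nat (m choose i) * (D ^ i * bell_poly i x) * (D ^ (Suc m - i) * x (Suc m - i)) \<in> \<int>"
        by (metis Ints_mult Ints_of_nat)
    qed
    finally show ?thesis using Suc by simp
  qed
qed

lemma fps_linear_ode_unique:
  fixes f g c :: "'a::{idom,ring_char_0} fps"
  assumes "fps_deriv f = c * f" "fps_deriv g = c * g" "f $ 0 = g $ 0"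
  shows "f = g"
proof -
  define d where "d = f - g"
  have d_ode: "fps_deriv d = c * d" using assms unfolding d_def by (simp add: algebra_simps)
  have "d $ n = 0" for n
  proof (induction n rule: less_induct)
    case (less n)
    show ?case
    proof (cases n)
      case 0
      then show ?thesis using assms(3) by (simp add: d_def)
    next
      case (Suc m)
      have "of_nat (Suc m) * d $ Suc m = (\<Sum>i=0..m. c $ i * d $ (m - i))"
        using fps_deriv_nth[of d m] by (simp add: d_ode fps_mult_nth)
      also have "\<dots> = 0" using less Suc by (intro sum.neutral) auto
      finally show ?thesis using Suc by (simp del: of_nat_Suc)
    qed
  qed
  then show ?thesis by (simp add: d_def fps_ext)
qed

definition exponent_fps :: "(nat \<Rightarrow> real) \<Rightarrow> real fps" where
  "exponent_fps x = Abs_fps (\<lambda>m. if m = 0 then 0 else x m / fact m)"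

definition bell_fps :: "(nat \<Rightarrow> real) \<Rightarrow> real fps" where
  "bell_fps x = fps_exp 1 oo exponent_fps x"

lemma bellY_eq_bell_fps: "bellY n x = fact n * bell_fps x $ n"
  unfolding bellY_def bell_fps_def exponent_fps_def ..

lemma bell_fps_0: "bell_fps x $ 0 = 1"
  by (simp add: bell_fps_def)

lemma fps_deriv_bell_fps: "fps_deriv (bell_fps x) = fps_deriv (exponent_fps x) * bell_fps x"
proof -
  have "fps_deriv (bell_fps x) = (fps_deriv (fps_exp 1) oo exponent_fps x) * fps_deriv (exponent_fps x)"
    unfolding bell_fps_def by (rule fps_compose_deriv) (simp add: exponent_fps_def)
  then show ?thesis by (simp add: bell_fps_def mult.commute)
qed

lemma bell_fps_add: "bell_fps (\<lambda>m. x m + y m) = bell_fps x * bell_fps y"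
proof (rule fps_linear_ode_unique)
  have "exponent_fps (\<lambda>m. x m + y m) = exponent_fps x + exponent_fps y"
    by (simp add: exponent_fps_def fps_eq_iff add_divide_distrib)
  then show "fps_deriv (bell_fps (\<lambda>m. x m + y m))
      = fps_deriv (exponent_fps x + exponent_fps y) * bell_fps (\<lambda>m. x m + y m)"
    by (simp add: fps_deriv_bell_fps)
  show "fps_deriv (bell_fps x * bell_fps y) = fps_deriv (exponent_fps x + exponent_fps y) * (bell_fps x * bell_fps y)"
    by (simp add: fps_deriv_bell_fps algebra_simps)
qed (simp add: bell_fps_0)

lemma bellY_add:
  "bellY n (\<lambda>m. x m + y m) = (\<Sum>j=0..n. of_nat (n choose j) * bellY j x * bellY (n - j) y)"
  unfolding bellY_eq_bell_fps bell_fps_add fps_mult_nth sum_distrib_left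
  by (intro sum.cong refl) (auto simp: bellY_eq_bell_fps binomial_fact field_simps)

lemma bellY_eq_bell_poly: "bellY n x = bell_poly n x"
proof (induction n rule: less_induct)
  case (less n)
  show ?case
  proof (cases n)
    case 0
    then show ?thesis by (simp add: bellY_eq_bell_fps bell_fps_0)
  next
    case (Suc m)
    have "bellY (Suc m) x = fact m * fps_deriv (bell_fps x) $ m"
      by (simp add: bellY_eq_bell_fps algebra_simps)
    also have "\<dots> = fact m * (\<Sum>i=0..m. fps_deriv (exponent_fps x) $ i * bell_fps x $ (m - i))"
      by (simp only: fps_deriv_bell_fps fps_mult_nth)
    also have "\<dots> = fact m * (\<Sum>i=0..m. fps_deriv (exponent_fps x) $ (m - i) * bell_fps x $ i)"
      by (subst sum.atLeastAtMost_rev[of _ 0 m]) simp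
    also have "\<dots> = (\<Sum>i=0..m. of_nat (m choose i) * bell_poly i x * x (Suc m - i))"
      unfolding sum_distrib_left
    proof (rule sum.cong[OF refl])
      fix i assume i: "i \<in> {0..m}"
      have "bell_poly i x = fact i * bell_fps x $ i"
        using less[of i] Suc i by (simp add: bellY_eq_bell_fps)
      moreover have "fps_deriv (exponent_fps x) $ (m - i) = x (Suc m - i) / fact (m - i)"
        using i by (simp add: exponent_fps_def Suc_diff_le del: of_nat_Suc)
      ultimately show "fact m * (fps_deriv (exponent_fps x) $ (m - i) * bell_fps x $ i)
          = of_nat (m choose i) * bell_poly i x * x (Suc m - i)"
        using i by (simp add: binomial_fact field_simps del: fps_deriv_nth)
    qed
    finally show ?thesis using Suc by simp
  qed
qed

lemma higher_deriv_of_real: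
  fixes g :: "complex \<Rightarrow> complex" and f :: "real \<Rightarrow> real"
  assumes "g holomorphic_on UNIV" and "\<And>x. g (of_real x) = of_real (f x)"
  shows "(deriv ^^ k) g (of_real x) = of_real ((deriv ^^ k) f x)"
proof (induction k arbitrary: x)
  case 0
  then show ?case using assms(2) by simp
next
  case (Suc k)
  have "(deriv ^^ k) g holomorphic_on UNIV"
    using assms(1) by (rule holomorphic_higher_deriv) auto
  then have "((deriv ^^ k) g has_field_derivative deriv ((deriv ^^ k) g) w) (at w)" for w
    by (meson DERIV_deriv_iff_field_differentiable UNIV_I holomorphic_on_imp_differentiable_at open_UNIV)
  then have "((\<lambda>t. of_real ((deriv ^^ k) f t) :: complex)
      has_vector_derivative deriv ((deriv ^^ k) g) (of_real x)) (at x)"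
    using has_vector_derivative_real_field[where s = UNIV] Suc.IH by fastforce
  from has_field_derivative_Re[OF this] has_field_derivative_Im[OF this]
  have "((deriv ^^ k) f has_real_derivative Re (deriv ((deriv ^^ k) g) (of_real x))) (at x)"
    and "((\<lambda>t. 0) has_real_derivative Im (deriv ((deriv ^^ k) g) (of_real x))) (at x)"
    by simp_all
  then have "deriv ((deriv ^^ k) g) (of_real x) = of_real (deriv ((deriv ^^ k) f) x)"
    by (metis DERIV_imp_deriv DERIV_const DERIV_unique complex_eq_iff Re_complex_of_real Im_complex_of_real)
  then show ?case by simp
qed

lemma higher_deriv_eq_mult_bell_poly:
  fixes f l :: "complex \<Rightarrow> complex"
  assumes f: "f holomorphic_on S" and l: "l holomorphic_on S" and S: "open S"
    and logderiv: "\<And>w. w \<in> S \<Longrightarrow> deriv f w = f w * l w"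
  shows "z \<in> S \<Longrightarrow> (deriv ^^ n) f z = f z * bell_poly n (\<lambda>m. (deriv ^^ (m - 1)) l z)"
proof (induction n arbitrary: z rule: less_induct)
  case (less n)
  show ?case
  proof (cases n)
    case 0
    then show ?thesis by simp
  next
    case (Suc m)
    define L where "L = (\<lambda>m. (deriv ^^ (m - 1)) l z)"
    have "(deriv ^^ Suc m) f z = (deriv ^^ m) (deriv f) z"
      by (simp add: funpow_Suc_right del: funpow.simps)
    also have "\<dots> = (deriv ^^ m) (\<lambda>w. f w * l w) z"
      using f l S less.prems logderiv
      by (intro higher_deriv_transform_within_open) (auto intro!: holomorphic_intros holomorphic_deriv)
    also have "\<dots> = (\<Sum>i=0..m. of_nat (m choose i) * (deriv ^^ i) f z * (deriv ^^ (m - i)) l z)"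
      by (rule higher_deriv_mult[OF f l S less.prems])
    also have "\<dots> = (\<Sum>i=0..m. f z * (of_nat (m choose i) * bell_poly i L * L (Suc m - i)))"
      using less Suc by (intro sum.cong) (auto simp: L_def Suc_diff_le)
    also have "\<dots> = f z * bell_poly (Suc m) L"
      by (simp add: sum_distrib_left)
    finally show ?thesis using Suc by (simp add: L_def)
  qed
qed

lemma has_field_derivative_rGamma_power:
  fixes g :: "complex \<Rightarrow> complex"
  assumes g: "(g has_field_derivative g') (at z)" and nonpole: "g z \<notin> \<int>\<^sub>\<le>\<^sub>0"
  shows "((\<lambda>w. rGamma (g w) ^ k) has_field_derivative
           - of_nat k * g' * Digamma (g z) * rGamma (g z) ^ k) (at z)"
proof -
  have "((\<lambda>w. rGamma (g w)) has_field_derivative - rGamma (g z) * Digamma (g z) * g') (at z)"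
    using DERIV_chain2[OF has_field_derivative_rGamma_no_nonpos_int[OF nonpole] g] .
  from DERIV_power[OF this, of k] show ?thesis
    by (rule DERIV_cong) (cases k, simp_all add: algebra_simps)
qed

definition strip :: "nat \<Rightarrow> complex set" where
  "strip n = {z. -1 < Re z \<and> Re z < of_nat n + 1}"

lemma open_strip: "open (strip n)"
  unfolding strip_def by (intro open_Collect_conj open_halfspace_Re_gt open_halfspace_Re_lt)

lemma strip_not_nonpos_Ints:
  assumes "z \<in> strip n"
  shows "z + 1 \<notin> \<int>\<^sub>\<le>\<^sub>0" and "of_nat n - z + 1 \<notin> \<int>\<^sub>\<le>\<^sub>0"
  using assms by (auto simp: strip_def elim!: nonpos_Ints_cases dest!: arg_cong[where f = Re])

definition Fcomplex :: "nat \<Rightarrow> nat \<Rightarrow> complex \<Rightarrow> complex" where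
  "Fcomplex a n z = of_real (fact n ^ a) * rGamma (z + 1) ^ (a - 1) * rGamma (of_nat n - z + 1) ^ a"

definition Flogderiv :: "nat \<Rightarrow> nat \<Rightarrow> complex \<Rightarrow> complex" where
  "Flogderiv a n z = - of_nat (a - 1) * Digamma (z + 1) + of_nat a * Digamma (of_nat n - z + 1)"

lemma Fcomplex_of_real: "Fcomplex a n (of_real t) = of_real (Ffun a n t)"
  unfolding Fcomplex_def Ffun_def by (simp flip: rGamma_complex_of_real)

lemma holomorphic_Fcomplex: "Fcomplex a n holomorphic_on A"
  unfolding Fcomplex_def by (intro holomorphic_intros)

lemma holomorphic_Flogderiv: "Flogderiv a n holomorphic_on strip n"
  unfolding Flogderiv_def
  by (intro analytic_imp_holomorphic analytic_intros) (auto dest: strip_not_nonpos_Ints)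

lemma deriv_Fcomplex:
  assumes "z \<in> strip n"
  shows "deriv (Fcomplex a n) z = Fcomplex a n z * Flogderiv a n z"
proof (rule DERIV_imp_deriv)
  have p1: "((\<lambda>w. rGamma (w + 1) ^ (a - 1)) has_field_derivative
      - of_nat (a - 1) * 1 * Digamma (z + 1) * rGamma (z + 1) ^ (a - 1)) (at z)"
    using strip_not_nonpos_Ints(1)[OF assms]
    by (intro has_field_derivative_rGamma_power) (auto intro!: derivative_eq_intros)
  have p2: "((\<lambda>w. rGamma (of_nat n - w + 1) ^ a) has_field_derivative
      - of_nat a * (- 1) * Digamma (of_nat n - z + 1) * rGamma (of_nat n - z + 1) ^ a) (at z)"
    using strip_not_nonpos_Ints(2)[OF assms]
    by (intro has_field_derivative_rGamma_power) (auto intro!: derivative_eq_intros)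
  show "(Fcomplex a n has_field_derivative Fcomplex a n z * Flogderiv a n z) (at z)"
    unfolding Fcomplex_def Flogderiv_def mult.assoc
    by (rule DERIV_cmult[OF DERIV_mult[OF p1 p2], THEN DERIV_cong]) (simp add: algebra_simps)
qed

lemma higher_deriv_Flogderiv:
  assumes "z \<in> strip n"
  shows "(deriv ^^ j) (Flogderiv a n) z = - of_nat (a - 1) * Polygamma j (z + 1)
           + of_nat a * ((-1) ^ j * Polygamma j (of_nat n - z + 1))"
proof -
  define T where "T = {w::complex. 0 < Re w}"
  have T: "open T" "Digamma holomorphic_on T"
    unfolding T_def
    by (auto intro!: open_halfspace_Re_gt holomorphic_on_Polygamma elim!: nonpos_Ints_cases)
  have into_T: "1 * w + 1 \<in> T" "(-1) * w + (of_nat n + 1) \<in> T" if "w \<in> strip n" for w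
    using that by (auto simp: strip_def T_def)
  have hol1: "(\<lambda>w. Digamma (1 * w + 1)) holomorphic_on strip n"
    and hol2: "(\<lambda>w. Digamma ((-1) * w + (of_nat n + 1))) holomorphic_on strip n"
    using into_T by (auto intro!: holomorphic_on_compose_gen[OF _ T(2), unfolded o_def] holomorphic_intros)
  have hol1': "(\<lambda>w. - of_nat (a - 1) * Digamma (1 * w + 1)) holomorphic_on strip n"
    and hol2': "(\<lambda>w. of_nat a * Digamma ((-1) * w + (of_nat n + 1))) holomorphic_on strip n"
    by (rule holomorphic_on_mult[OF holomorphic_on_const hol1] holomorphic_on_mult[OF holomorphic_on_const hol2])+
  have "Flogderiv a n = (\<lambda>w. - of_nat (a - 1) * Digamma (1 * w + 1) + of_nat a * Digamma ((-1) * w + (of_nat n + 1)))"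
    by (auto simp: Flogderiv_def fun_eq_iff algebra_simps)
  then have "(deriv ^^ j) (Flogderiv a n) z = - of_nat (a - 1) * (deriv ^^ j) (\<lambda>w. Digamma (1 * w + 1)) z
       + of_nat a * (deriv ^^ j) (\<lambda>w. Digamma ((-1) * w + (of_nat n + 1))) z"
    by (simp only: higher_deriv_add[OF hol1' hol2' open_strip assms]
        higher_deriv_cmult[OF hol1 assms open_strip] higher_deriv_cmult[OF hol2 assms open_strip])
  also have "(deriv ^^ j) (\<lambda>w. Digamma (1 * w + 1)) z = Polygamma j (z + 1)"
    using higher_deriv_compose_linear'[OF T(2) open_strip T(1) assms into_T(1)]
      higher_deriv_Polygamma[of "z + 1" j 0] strip_not_nonpos_Ints(1)[OF assms] by simp
  also have "(deriv ^^ j) (\<lambda>w. Digamma ((-1) * w + (of_nat n + 1))) z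
      = (-1) ^ j * Polygamma j (of_nat n - z + 1)"
    using higher_deriv_compose_linear'[OF T(2) open_strip T(1) assms into_T(2)]
      higher_deriv_Polygamma[of "of_nat n - z + 1" j 0] strip_not_nonpos_Ints(2)[OF assms]
    by (simp add: algebra_simps)
  finally show ?thesis .
qed

lemma harmgen_conv_lessThan: "harmgen m k = (\<Sum>i<k. 1 / real (Suc i) ^ m)"
  unfolding harmgen_def by (induction k) auto

lemma Polygamma_Suc_nat:
  "Polygamma j (real (Suc k)) =
     (if j = 0 then harmgen 1 k - euler_mascheroni
      else (-1) ^ Suc j * fact j * (zeta_nat (Suc j) - harmgen (Suc j) k))"
proof (cases "j = 0")
  case True
  have "harm k = harmgen 1 k"
    unfolding harm_def harmgen_def by (simp add: inverse_eq_divide)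
  then show ?thesis using True Digamma_of_nat[of k, where 'a = real] by simp
next
  case False
  have "Polygamma j (1 + real k) = Polygamma j 1 + (-1) ^ j * fact j * (\<Sum>i<k. 1 / (1 + real i) ^ Suc j)"
    using Polygamma_plus_of_nat[of k "1::real" j] by (auto simp del: of_nat_Suc)
  moreover have "Polygamma j (1::real) = (-1) ^ Suc j * fact j * zeta_nat (Suc j)"
    using False unfolding Polygamma_def zeta_nat_def by (simp add: inverse_eq_divide add.commute)
  moreover have "(\<Sum>i<k. 1 / (1 + real i) ^ Suc j) = harmgen (Suc j) k"
    unfolding harmgen_conv_lessThan by (simp add: add.commute)
  ultimately show ?thesis using False by (simp add: algebra_simps add.commute)
qed

lemma higher_deriv_Flogderiv_nat:
  assumes "k \<le> n" and "m \<ge> 1" and "a \<ge> 1"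
  shows "(deriv ^^ (m - 1)) (Flogderiv a n) (of_nat k) = of_real (rterm a n k m - xconst a m)"
proof -
  define j where "j = m - 1"
  have m: "m = Suc j" using assms(2) by (simp add: j_def)
  have "of_nat k \<in> strip n" using assms(1) by (simp add: strip_def)
  moreover have "of_nat n - of_nat k = (of_nat (n - k) :: complex)"
    using assms(1) by (simp add: of_nat_diff)
  ultimately have "(deriv ^^ j) (Flogderiv a n) (of_nat k) = of_real
      (- real (a - 1) * Polygamma j (real (Suc k)) + real a * ((-1) ^ j * Polygamma j (real (Suc (n - k)))))"
    by (simp add: higher_deriv_Flogderiv add.commute flip: Polygamma_of_real)
  also have "- real (a - 1) * Polygamma j (real (Suc k)) + real a * ((-1) ^ j * Polygamma j (real (Suc (n - k))))
      = rterm a n k m - xconst a m"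
    using assms(3) unfolding Polygamma_Suc_nat rterm_def xconst_def m
    by (cases "j = 0") (auto simp: algebra_simps of_nat_diff)
  finally show ?thesis by (simp add: j_def)
qed

lemma Ffun_nat:
  assumes "k \<le> n" and "a \<ge> 1"
  shows "Ffun a n (real k) = real (n choose k) ^ a * fact k"
proof -
  have rGamma_nat: "rGamma (real j + 1) = 1 / fact j" for j
    using Gamma_fact[of j, where 'a = real] by (simp add: rGamma_inverse_Gamma add.commute divide_inverse)
  have "real n - real k + 1 = real (n - k) + 1" using assms(1) by (simp add: of_nat_diff)
  then have "Ffun a n (real k) = fact n ^ a / (fact k ^ (a - 1) * fact (n - k) ^ a)"
    unfolding Ffun_def by (simp only: rGamma_nat) (simp add: power_divide)
  also have "\<dots> = (fact n / (fact k * fact (n - k))) ^ a * fact k"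
  proof -
    have "fact k ^ a = fact k ^ (a - 1) * (fact k :: real)"
      using assms(2) by (metis Suc_diff_le diff_Suc_1 power_Suc2)
    then show ?thesis by (simp add: power_divide power_mult_distrib field_simps)
  qed
  also have "\<dots> = real (n choose k) ^ a * fact k" using assms(1) by (simp add: binomial_fact)
  finally show ?thesis .
qed

lemma higher_deriv_Ffun_nat:
  assumes "k \<le> n" and "a \<ge> 1"
  shows "(deriv ^^ \<mu>) (Ffun a n) (real k) = Ffun a n (real k) * bellY \<mu> (\<lambda>m. rterm a n k m - xconst a m)"
proof -
  have "of_nat k \<in> strip n" using assms(1) by (simp add: strip_def)
  have "complex_of_real ((deriv ^^ \<mu>) (Ffun a n) (real k)) = (deriv ^^ \<mu>) (Fcomplex a n) (of_nat k)"
    by (metis higher_deriv_of_real[OF holomorphic_Fcomplex Fcomplex_of_real] of_real_of_nat_eq)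
  also have "\<dots> = Fcomplex a n (of_nat k) * bell_poly \<mu> (\<lambda>m. (deriv ^^ (m - 1)) (Flogderiv a n) (of_nat k))"
    using \<open>of_nat k \<in> strip n\<close>
    by (intro higher_deriv_eq_mult_bell_poly[of _ "strip n"] holomorphic_Fcomplex
        holomorphic_Flogderiv open_strip deriv_Fcomplex)
  also have "bell_poly \<mu> (\<lambda>m. (deriv ^^ (m - 1)) (Flogderiv a n) (of_nat k))
      = of_real (bellY \<mu> (\<lambda>m. rterm a n k m - xconst a m))"
    unfolding bellY_eq_bell_poly of_real_bell_poly
    using assms by (intro bell_poly_cong higher_deriv_Flogderiv_nat) auto
  also have "Fcomplex a n (of_nat k) = of_real (Ffun a n (real k))"
    by (metis Fcomplex_of_real of_real_of_nat_eq)
  finally show ?thesis by (simp only: of_real_mult [symmetric] of_real_eq_iff)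
qed

lemma harmgen_scaled_Ints:
  assumes "s \<le> n"
  shows "real (Lcm {1..n}) ^ m * harmgen m s \<in> \<int>"
proof -
  have "real (Lcm {1..n}) ^ m * harmgen m s = (\<Sum>j=1..s. real (Lcm {1..n} div j) ^ m)"
    unfolding harmgen_def sum_distrib_left
  proof (rule sum.cong[OF refl])
    fix j assume "j \<in> {1..s}"
    then have "j dvd Lcm {1..n}" using assms by (intro dvd_Lcm) auto
    then show "real (Lcm {1..n}) ^ m * (1 / real j ^ m) = real (Lcm {1..n} div j) ^ m"
      by (simp add: real_of_nat_div power_divide)
  qed
  also have "\<dots> \<in> \<int>" by (intro Ints_sum) simp
  finally show ?thesis .
qed

lemma rterm_scaled_Ints:
  assumes "k \<le> n"
  shows "real (Lcm {1..n}) ^ m * rterm a n k m \<in> \<int>"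
proof -
  define D where "D = real (Lcm {1..n})"
  have "D ^ m * harmgen m (n - k) \<in> \<int>" "D ^ m * harmgen m k \<in> \<int>"
    using harmgen_scaled_Ints assms unfolding D_def by auto
  moreover have "D ^ m * rterm a n k m = fact (m - 1) * (real a * (D ^ m * harmgen m (n - k))
      + (-1) ^ m * (real a - 1) * (D ^ m * harmgen m k))"
    unfolding rterm_def by (simp add: algebra_simps)
  ultimately show ?thesis
    unfolding D_def[symmetric] by (metis Ints_add Ints_diff Ints_mult Ints_of_nat Ints_1 Ints_power
        Ints_minus of_nat_fact)
qed

lemma pseq_scaled_Ints: "real (Lcm {1..n}) ^ \<mu> * pseq a n \<mu> \<in> \<int>"
  unfolding pseq_def sum_distrib_left
proof (intro Ints_sum)
  fix k assume "k \<in> {0..n}"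
  then have "real (Lcm {1..n}) ^ \<mu> * bellY \<mu> (rterm a n k) \<in> \<int>"
    unfolding bellY_eq_bell_poly by (intro bell_poly_scaled_Ints rterm_scaled_Ints) auto
  then show "real (Lcm {1..n}) ^ \<mu> * (real (n choose k) ^ a * fact k * bellY \<mu> (rterm a n k)) \<in> \<int>"
    by (metis Ints_mult Ints_of_nat Ints_power of_nat_fact mult.left_commute)
qed

lemma Fsum_0_eq_qseq: "a \<ge> 1 \<Longrightarrow> Fsum a n 0 = qseq a n"
  unfolding Fsum_def qseq_def by (intro sum.cong refl) (simp add: Ffun_nat)

lemma pseq_eq_sum_Fsum:
  assumes "a \<ge> 1"
  shows "pseq a n \<mu> = (\<Sum>j=0..\<mu>. of_nat (\<mu> choose j) * alpha a (\<mu> - j) * Fsum a n j)"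
proof -
  have "pseq a n \<mu> = (\<Sum>k=0..n. \<Sum>j=0..\<mu>. of_nat (\<mu> choose j) * alpha a (\<mu> - j) *
      (deriv ^^ j) (Ffun a n) (real k))"
    unfolding pseq_def
  proof (rule sum.cong[OF refl])
    fix k assume k: "k \<in> {0..n}"
    have "bellY \<mu> (rterm a n k) = bellY \<mu> (\<lambda>m. (rterm a n k m - xconst a m) + xconst a m)"
      by simp
    also have "\<dots> = (\<Sum>j=0..\<mu>. of_nat (\<mu> choose j) * bellY j (\<lambda>m. rterm a n k m - xconst a m) * alpha a (\<mu> - j))"
      unfolding bellY_add alpha_def ..
    finally show "real (n choose k) ^ a * fact k * bellY \<mu> (rterm a n k) =
        (\<Sum>j=0..\<mu>. of_nat (\<mu> choose j) * alpha a (\<mu> - j) * (deriv ^^ j) (Ffun a n) (real k))"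
      using k assms by (simp add: higher_deriv_Ffun_nat Ffun_nat sum_distrib_left algebra_simps)
  qed
  also have "\<dots> = (\<Sum>j=0..\<mu>. of_nat (\<mu> choose j) * alpha a (\<mu> - j) * Fsum a n j)"
    unfolding Fsum_def by (subst sum.swap) (simp add: sum_distrib_left)
  finally show ?thesis .
qed

theorem lemma1:
  fixes a :: nat
  assumes "a \<ge> 2"
  shows "(\<forall>\<mu>\<in>{1..a-1}. \<exists>lam :: nat \<Rightarrow> real. \<forall>n.
            pseq a n \<mu> - qseq a n * alpha a \<mu> = (\<Sum>\<nu>=1..\<mu>. lam \<nu> * Fsum a n \<nu>))
       \<and> (\<forall>n. Fsum a n 0 = qseq a n)
       \<and> (\<forall>n. \<forall>\<mu>\<in>{0..a-1}. real (Lcm {1..n}) ^ \<mu> * pseq a n \<mu> \<in> \<int>)"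
proof (intro conjI ballI allI)
  have a: "a \<ge> 1" using assms by simp
  fix \<mu>
  have expansion: "pseq a n \<mu> - qseq a n * alpha a \<mu>
      = (\<Sum>\<nu>=1..\<mu>. (of_nat (\<mu> choose \<nu>) * alpha a (\<mu> - \<nu>)) * Fsum a n \<nu>)" for n
    unfolding pseq_eq_sum_Fsum[OF a] Fsum_0_eq_qseq[OF a, symmetric]
    by (simp add: sum.atLeast_Suc_atMost)
  show "\<exists>lam. \<forall>n. pseq a n \<mu> - qseq a n * alpha a \<mu> = (\<Sum>\<nu>=1..\<mu>. lam \<nu> * Fsum a n \<nu>)"
    using expansion by (intro exI[of _ "\<lambda>\<nu>. of_nat (\<mu> choose \<nu>) * alpha a (\<mu> - \<nu>)"] allI)
  show "Fsum a n 0 = qseq a n" for n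
    using a by (rule Fsum_0_eq_qseq)
  show "real (Lcm {1..n}) ^ \<mu> * pseq a n \<mu> \<in> \<int>" for n
    by (rule pseq_scaled_Ints)
qed

end
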